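(* Assume that for every $j\in J$ the subspace $Y^\perp$ is not contained in the hyperplane $\{p_j=0\}$, and that the critical set $C_{\mathcal A,a}$ is nonempty. Then the map $$\Psi_{\mathcal A,a}:U(\mathcal A)\to\mathbb C^n\times(\mathbb C^n)^*,\qquad (x,u)\mapsto\Big(x,\ \frac{\partial\Phi_{\mathcal A,a}}{\partial z_1}(x,u),\dots,\frac{\partial\Phi_{\mathcal A,a}}{\partial z_n}(x,u)\Big)=\Big(x,\frac{a_1}{f_1(x,u)},\dots,\frac{a_n}{f_n(x,u)}\Big),$$ restricted to $C_{\mathcal A,a}$, is a diffeomorphism of $C_{\mathcal A,a}$ onto $L_{Y,a}$.
   Context: Let $0<k<n$, $J=\{1,\dots,n\}$. On $\mathbb C^k$ (coordinates $t$) fix nonzero linear functions $g_j=b^1_jt_1+\dots+b^k_jt_k$, $j\in J$, spanning $(\mathbb C^k)^*$. On $\mathbb C^n\times\mathbb C^k$ (coordinates $z,t$) let $f_j=g_j+z_j$, $H_j=\{f_j=0\}$, and $U(\mathcal A)$ the complement of $\bigcup_jH_j$. Fix $a\in(\mathbb C^\times)^n$, $\Phi_{\mathcal A,a}=\sum_ja_j\log f_j$, and $C_{\mathcal A,a}=\{(x,u)\in U(\mathcal A):\partial\Phi_{\mathcal A,a}/\partial t_i(x,u)=0,\ i=1,\dots,k\}$, where $\partial\Phi_{\mathcal A,a}/\partial t_i=\sum_jb^i_ja_j/f_j$. $Y\subset\mathbb C^n$ is the $k$-dimensional subspace spanned by $b^i=(b^i_1,\dots,b^i_n)$, $i=1,\dots,k$.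 $\mathbb C^n$ has coordinates $q_1,\dots,q_n$ and $(\mathbb C^n)^*$ has dual coordinates $p_1,\dots,p_n$; $Y^\perp\subset(\mathbb C^n)^*$ is the annihilator of $Y$. With $r_a(q,p)=(q_1+a_1/p_1,\dots,q_n+a_n/p_n,p)$ (defined where all $p_j\ne0$), $L_{Y,a}=r_a(Y\times Y^\perp)$, the image of the points of $Y\times Y^\perp$ with all $p_j\neq 0$. *)

theory Defs
  imports "HOL-Analysis.Analysis"
begin

text \<open>Index set J = type 'n (CARD('n) = n); coordinates t of C^k indexed by type 'k.
  The coefficient matrix B has entries B $ j $ i = b^i_j.\<close>

definition gfun :: "complex^'k^'n \<Rightarrow> 'n \<Rightarrow> complex^'k \<Rightarrow> complex" where
  "gfun B j t = (\<Sum>i\<in>UNIV. B $ j $ i * t $ i)"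

definition ffun :: "complex^'k^'n \<Rightarrow> 'n \<Rightarrow> ((complex^'n) \<times> (complex^'k)) \<Rightarrow> complex" where
  "ffun B j zt = gfun B j (snd zt) + fst zt $ j"

definition g_span_dual :: "complex^'k^'n \<Rightarrow> bool" where
  "g_span_dual B \<longleftrightarrow> (\<forall>c::complex^'k. \<exists>lam::complex^'n.
      \<forall>t. (\<Sum>i\<in>UNIV. c $ i * t $ i) = (\<Sum>j\<in>UNIV. lam $ j * gfun B j t))"

definition U_A :: "complex^'k^'n \<Rightarrow> ((complex^'n) \<times> (complex^'k)) set" where
  "U_A B = {zt. \<forall>j. ffun B j zt \<noteq> 0}"

definition crit_set :: "complex^'k^'n \<Rightarrow> complex^'n \<Rightarrow> ((complex^'n) \<times> (complex^'k)) set" where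
  "crit_set B a = {xu \<in> U_A B. \<forall>i. (\<Sum>j\<in>UNIV. B $ j $ i * a $ j / ffun B j xu) = 0}"

definition Y_sp :: "complex^'k^'n \<Rightarrow> (complex^'n) set" where
  "Y_sp B = {q. \<exists>t::complex^'k. q = (\<chi> j. \<Sum>i\<in>UNIV. t $ i * B $ j $ i)}"

definition Y_perp :: "complex^'k^'n \<Rightarrow> (complex^'n) set" where
  "Y_perp B = {p. \<forall>q\<in>Y_sp B. (\<Sum>j\<in>UNIV. p $ j * q $ j) = 0}"

definition r_map :: "complex^'n \<Rightarrow> ((complex^'n) \<times> (complex^'n)) \<Rightarrow> ((complex^'n) \<times> (complex^'n))" where
  "r_map a qp = ((\<chi> j. fst qp $ j + a $ j / snd qp $ j), snd qp)"

definition L_Ya :: "complex^'k^'n \<Rightarrow> complex^'n \<Rightarrow> ((complex^'n) \<times> (complex^'n)) set" where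
  "L_Ya B a = r_map a ` {(q, p). q \<in> Y_sp B \<and> p \<in> Y_perp B \<and> (\<forall>j. p $ j \<noteq> 0)}"

definition Psi_map :: "complex^'k^'n \<Rightarrow> complex^'n \<Rightarrow> ((complex^'n) \<times> (complex^'k)) \<Rightarrow> ((complex^'n) \<times> (complex^'n))" where
  "Psi_map B a xu = (fst xu, \<chi> j. a $ j / ffun B j xu)"

text \<open>Real C^\<infinity> on an open set: derivatives of every order exist (Frechet),
  D vs is the iterated derivative applied to the direction list vs.\<close>
definition smooth_on :: "'a::real_normed_vector set \<Rightarrow> ('a \<Rightarrow> 'b::real_normed_vector) \<Rightarrow> bool" where
  "smooth_on T f \<longleftrightarrow> (\<exists>D :: 'a list \<Rightarrow> 'a \<Rightarrow> 'b.
      (\<forall>x\<in>T. D [] x = f x) \<and>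
      (\<forall>vs. \<forall>x\<in>T. (D vs has_derivative (\<lambda>h. D (h # vs) x)) (at x)))"

definition smooth_map_on :: "'a::real_normed_vector set \<Rightarrow> ('a \<Rightarrow> 'b::real_normed_vector) \<Rightarrow> bool" where
  "smooth_map_on S f \<longleftrightarrow> (\<forall>x\<in>S. \<exists>T g. open T \<and> x \<in> T \<and> smooth_on T g \<and> (\<forall>y\<in>S \<inter> T. f y = g y))"

definition diffeomorphism_onto :: "('a::real_normed_vector \<Rightarrow> 'b::real_normed_vector) \<Rightarrow> 'a set \<Rightarrow> 'b set \<Rightarrow> bool" where
  "diffeomorphism_onto f S T \<longleftrightarrow> bij_betw f S T \<and> smooth_map_on S f \<and> smooth_map_on T (inv_into S f)"

end

theory Submission imports Defs "HOL-Computational_Algebra.Polynomial"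
begin

text \<open>
  Writing \<open>p\<^sub>j = a\<^sub>j / f\<^sub>j(x,u)\<close>, the critical equations say exactly that \<open>p \<in> Y\<^sup>\<bottom>\<close>, and
  \<open>x\<^sub>j = f\<^sub>j(x,u) - g\<^sub>j(u) = a\<^sub>j / p\<^sub>j + g\<^sub>j(-u)\<close> with \<open>(g\<^sub>j(-u))\<^sub>j \<in> Y\<close>; so \<open>\<Psi>\<close> maps the critical
  set into \<open>L\<^sub>Y\<^sub>,\<^sub>a\<close>. Since the \<open>g\<^sub>j\<close> span the dual, every coordinate \<open>u\<^sub>i\<close> is a fixed linear
  combination \<open>\<Sum>\<^sub>j \<lambda>\<^sub>i\<^sub>j g\<^sub>j(u)\<close>, which gives the explicit inverse
  \<open>(x,p) \<mapsto> (x, (\<Sum>\<^sub>j \<lambda>\<^sub>i\<^sub>j (a\<^sub>j/p\<^sub>j - x\<^sub>j))\<^sub>i)\<close>. Both \<open>\<Psi>\<close> and this inverse are affine maps plus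
  polynomials in reciprocals of linear forms, and that class is closed under differentiation,
  hence consists of smooth maps.
\<close>

definition derivative_in :: "('a::real_normed_vector \<Rightarrow> 'b::real_normed_vector) set \<Rightarrow> 'a set \<Rightarrow> ('a \<Rightarrow> 'b) \<Rightarrow> 'a \<Rightarrow> 'a \<Rightarrow> 'b" where
  "derivative_in F T f = (SOME G. (\<forall>h. G h \<in> F) \<and> (\<forall>x\<in>T. (f has_derivative (\<lambda>h. G h x)) (at x)))"

primrec iterated_derivative_in :: "('a::real_normed_vector \<Rightarrow> 'b::real_normed_vector) set \<Rightarrow> 'a set \<Rightarrow> ('a \<Rightarrow> 'b) \<Rightarrow> 'a list \<Rightarrow> 'a \<Rightarrow> 'b" where
  "iterated_derivative_in F T f [] = f"
| "iterated_derivative_in F T f (h # vs) = derivative_in F T (iterated_derivative_in F T f vs) h"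

lemma smooth_on_if_derivatives_closed:
  assumes closed: "\<And>f. f \<in> F \<Longrightarrow> \<exists>G. (\<forall>h. G h \<in> F) \<and> (\<forall>x\<in>T. (f has_derivative (\<lambda>h. G h x)) (at x))"
    and f: "f \<in> F"
  shows "smooth_on T f"
proof -
  have derivative: "(\<forall>h. derivative_in F T g h \<in> F) \<and>
      (\<forall>x\<in>T. (g has_derivative (\<lambda>h. derivative_in F T g h x)) (at x))" if "g \<in> F" for g
    unfolding derivative_in_def by (rule someI_ex[OF closed[OF that]])
  have mem: "iterated_derivative_in F T f vs \<in> F" for vs
    by (induction vs) (use f derivative in auto)
  show ?thesis unfolding smooth_on_def
    by (rule exI[of _ "iterated_derivative_in F T f"]) (use derivative[OF mem] in auto)
qed

lemma smooth_map_on_if_smooth_on_open: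
  assumes "open T" "S \<subseteq> T" "smooth_on T g" "\<And>y. y \<in> S \<Longrightarrow> f y = g y"
  shows "smooth_map_on S f"
  unfolding smooth_map_on_def using assms by blast

definition inverse_poly_maps :: "('i::finite \<Rightarrow> 'a::real_normed_vector \<Rightarrow> complex) \<Rightarrow> ('i \<Rightarrow> complex \<Rightarrow> 'b::real_normed_vector) \<Rightarrow> ('a \<Rightarrow> 'b) set" where
  "inverse_poly_maps l E = {f. \<exists>L c P. bounded_linear L \<and>
      f = (\<lambda>z. L z + c + (\<Sum>j\<in>UNIV. E j (poly (P j) (inverse (l j z)))))}"

lemma has_derivative_poly_inverse:
  fixes l :: "'a::real_normed_vector \<Rightarrow> complex"
  assumes l: "bounded_linear l" and E: "bounded_linear E" and nz: "l x \<noteq> 0"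
  shows "((\<lambda>z. E (poly P (inverse (l z)))) has_derivative
           (\<lambda>h. E (poly ([:0, 0, - l h:] * pderiv P) (inverse (l x))))) (at x)"
proof -
  let ?w = "l x"
  have outer: "((\<lambda>w. poly P (inverse w)) has_field_derivative
        (poly (pderiv P) (inverse ?w) * (- (inverse ?w * inverse ?w)))) (at ?w)"
    using DERIV_chain2[OF poly_DERIV DERIV_inverse[OF nz], of P]
    by (simp add: power2_eq_square)
  have "((\<lambda>z. poly P (inverse (l z))) has_derivative
        (\<lambda>h. poly (pderiv P) (inverse ?w) * (- (inverse ?w * inverse ?w)) * l h)) (at x)"
    using diff_chain_at[OF bounded_linear_imp_has_derivative[OF l]
        outer[unfolded has_field_derivative_def]]
    by (simp add: o_def mult.commute)
  then show ?thesis
    by (rule has_derivative_eq_rhs[OF bounded_linear.has_derivative[OF E]])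
       (auto simp: fun_eq_iff algebra_simps power2_eq_square)
qed

lemma inverse_poly_maps_derivatives_closed:
  assumes l: "\<And>j. bounded_linear (l j)" and E: "\<And>j. bounded_linear (E j)"
    and nz: "\<And>x j. x \<in> T \<Longrightarrow> l j x \<noteq> 0" and f: "f \<in> inverse_poly_maps l E"
  shows "\<exists>G. (\<forall>h. G h \<in> inverse_poly_maps l E) \<and> (\<forall>x\<in>T. (f has_derivative (\<lambda>h. G h x)) (at x))"
proof -
  obtain L c P where L: "bounded_linear L"
    and f_eq: "f = (\<lambda>z. L z + c + (\<Sum>j\<in>UNIV. E j (poly (P j) (inverse (l j z)))))"
    using f unfolding inverse_poly_maps_def by blast
  define G where "G = (\<lambda>h z. (\<lambda>_. 0) z + L h +
      (\<Sum>j\<in>UNIV. E j (poly ([:0, 0, - l j h:] * pderiv (P j)) (inverse (l j z)))))"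
  have "G h \<in> inverse_poly_maps l E" for h
    unfolding inverse_poly_maps_def G_def
    by (intro CollectI exI[of _ "\<lambda>_. 0"] exI[of _ "L h"]
        exI[of _ "\<lambda>j. [:0, 0, - l j h:] * pderiv (P j)"]) simp
  moreover have "(f has_derivative (\<lambda>h. G h x)) (at x)" if "x \<in> T" for x
  proof -
    have "(f has_derivative (\<lambda>h. L h + 0 +
        (\<Sum>j\<in>UNIV. E j (poly ([:0, 0, - l j h:] * pderiv (P j)) (inverse (l j x)))))) (at x)"
      unfolding f_eq
      by (intro has_derivative_add has_derivative_sum bounded_linear_imp_has_derivative[OF L]
            has_derivative_const has_derivative_poly_inverse l E nz that)
    then show ?thesis unfolding G_def by (simp add: add.commute)
  qed
  ultimately show ?thesis by blast
qed

lemma smooth_on_inverse_poly_maps: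
  assumes "\<And>j. bounded_linear (l j)" "\<And>j. bounded_linear (E j)"
    "\<And>x j. x \<in> T \<Longrightarrow> l j x \<noteq> 0" "f \<in> inverse_poly_maps l E"
  shows "smooth_on T f"
  by (rule smooth_on_if_derivatives_closed[where F="inverse_poly_maps l E"])
     (use inverse_poly_maps_derivatives_closed assms in blast)+

lemma open_Collect_all_nonzero:
  fixes l :: "'i::finite \<Rightarrow> 'a::real_normed_vector \<Rightarrow> complex"
  assumes "\<And>j. bounded_linear (l j)"
  shows "open {z. \<forall>j. l j z \<noteq> 0}"
proof -
  have "open {z. l j z \<noteq> 0}" for j
    by (rule open_Collect_neq) (auto intro: linear_continuous_on assms continuous_on_const)
  then have "open (\<Inter>j. {z. l j z \<noteq> 0})" by (auto intro: open_INT)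
  moreover have "{z. \<forall>j. l j z \<noteq> 0} = (\<Inter>j. {z. l j z \<noteq> 0})" by auto
  ultimately show ?thesis by simp
qed

lemma scaleR_complex: "r *\<^sub>R (c::complex) = of_real r * c"
  by (simp add: scaleR_conv_of_real)

lemma scaleR_vec_nth: "(r *\<^sub>R (x::'a::real_vector^'n)) $ i = r *\<^sub>R (x $ i)"
  by simp

lemma sum_axis_mult_nth: "(\<Sum>i'\<in>UNIV. axis i (1::complex) $ i' * t $ i') = t $ i"
  by (simp add: axis_def if_distrib[of "\<lambda>x. x * _"] cong: if_cong)

lemma bounded_linear_ffun: "bounded_linear (ffun B j)"
  unfolding linear_conv_bounded_linear[symmetric]
  by (rule linearI)
     (simp_all add: ffun_def gfun_def sum.distrib algebra_simps scaleR_complex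
       scaleR_vec_nth sum_distrib_left)

lemma bounded_linear_snd_nth: "bounded_linear (\<lambda>y::'a::euclidean_space \<times> (complex^'n). snd y $ j)"
  unfolding linear_conv_bounded_linear[symmetric] by (rule linearI) simp_all

lemma open_U_A: "open (U_A B)"
  unfolding U_A_def by (rule open_Collect_all_nonzero[OF bounded_linear_ffun])

lemma g_span_dual_coordinates:
  assumes "g_span_dual B"
  obtains Lam :: "'k::finite \<Rightarrow> complex^'n::finite"
  where "\<And>i t. t $ i = (\<Sum>j\<in>UNIV. Lam i $ j * gfun B j t)"
proof -
  have "\<exists>lam::complex^'n. \<forall>t::complex^'k. t $ i = (\<Sum>j\<in>UNIV. lam $ j * gfun B j t)" for i
  proof -
    obtain lam :: "complex^'n"
      where "\<forall>t. (\<Sum>i'\<in>UNIV. axis i 1 $ i' * t $ i') = (\<Sum>j\<in>UNIV. lam $ j * gfun B j t)"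
      using assms unfolding g_span_dual_def by blast
    then show ?thesis by (auto simp: sum_axis_mult_nth)
  qed
  then show thesis using that by metis
qed

lemma Y_perp_sum_column:
  assumes "p \<in> Y_perp B"
  shows "(\<Sum>j\<in>UNIV. B $ j $ i * p $ j) = 0"
proof -
  have "(\<chi> j. \<Sum>i'\<in>UNIV. axis i 1 $ i' * B $ j $ i') \<in> Y_sp B"
    unfolding Y_sp_def by blast
  with assms have "(\<Sum>j\<in>UNIV. p $ j * (\<chi> j. \<Sum>i'\<in>UNIV. axis i 1 $ i' * B $ j $ i') $ j) = 0"
    unfolding Y_perp_def by blast
  then show ?thesis by (simp add: sum_axis_mult_nth mult.commute)
qed

lemma Psi_map_mem_L_Ya:
  assumes z: "z \<in> crit_set B a" and a: "\<forall>j. a $ j \<noteq> 0"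
  shows "Psi_map B a z \<in> L_Ya B a"
proof -
  have nz: "ffun B j z \<noteq> 0" for j using z unfolding crit_set_def U_A_def by auto
  have crit: "(\<Sum>j\<in>UNIV. B $ j $ i * a $ j / ffun B j z) = 0" for i
    using z unfolding crit_set_def by auto
  define p where "p = (\<chi> j. a $ j / ffun B j z)"
  define q where "q = (\<chi> j. \<Sum>i\<in>UNIV. (- snd z) $ i * B $ j $ i)"
  have "q \<in> Y_sp B" unfolding Y_sp_def q_def by blast
  moreover have "p \<in> Y_perp B" unfolding Y_perp_def mem_Collect_eq
  proof
    fix q' assume "q' \<in> Y_sp B"
    then obtain t where t: "q' = (\<chi> j. \<Sum>i\<in>UNIV. t $ i * B $ j $ i)" unfolding Y_sp_def by blast
    have "(\<Sum>j\<in>UNIV. p $ j * q' $ j) = (\<Sum>j\<in>UNIV. \<Sum>i\<in>UNIV. t $ i * (B $ j $ i * a $ j / ffun B j z))"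
      by (simp add: t p_def sum_distrib_left algebra_simps)
    also have "\<dots> = (\<Sum>i\<in>UNIV. t $ i * (\<Sum>j\<in>UNIV. B $ j $ i * a $ j / ffun B j z))"
      by (subst sum.swap) (simp add: sum_distrib_left)
    finally show "(\<Sum>j\<in>UNIV. p $ j * q' $ j) = 0" by (simp add: crit)
  qed
  moreover have "\<forall>j. p $ j \<noteq> 0" using nz a by (simp add: p_def)
  moreover have "Psi_map B a z = r_map a (q, p)"
    using nz a by (simp add: Psi_map_def r_map_def p_def q_def vec_eq_iff ffun_def gfun_def
        mult.commute sum_negf)
  ultimately show ?thesis unfolding L_Ya_def by blast
qed

definition Psi_inv :: "('k::finite \<Rightarrow> complex^'n::finite) \<Rightarrow> complex^'n \<Rightarrow> (complex^'n) \<times> (complex^'n) \<Rightarrow> (complex^'n) \<times> (complex^'k)" where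
  "Psi_inv Lam a y = (fst y, \<chi> i. \<Sum>j\<in>UNIV. Lam i $ j * (a $ j / snd y $ j - fst y $ j))"

context
  fixes B :: "complex^'k^'n" and a :: "complex^'n" and Lam :: "'k::finite \<Rightarrow> complex^'n::finite"
  assumes coordinates: "\<And>i t. t $ i = (\<Sum>j\<in>UNIV. Lam i $ j * gfun B j t)"
    and a_nonzero: "\<forall>j. a $ j \<noteq> 0"
begin

lemma Psi_inv_Psi_map:
  assumes "z \<in> U_A B"
  shows "Psi_inv Lam a (Psi_map B a z) = z"
proof -
  have "(\<Sum>j\<in>UNIV. Lam i $ j * (a $ j / (a $ j / ffun B j z) - fst z $ j)) = snd z $ i" for i
    using assms a_nonzero by (simp add: U_A_def coordinates[of "snd z" i] ffun_def)
  then show ?thesis by (simp add: Psi_inv_def Psi_map_def vec_eq_iff prod_eq_iff)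
qed

lemma Psi_map_Psi_inv_and_mem_crit_set:
  assumes "y \<in> L_Ya B a"
  shows "Psi_map B a (Psi_inv Lam a y) = y \<and> Psi_inv Lam a y \<in> crit_set B a"
proof -
  obtain q p where q: "q \<in> Y_sp B" and p: "p \<in> Y_perp B" and p_nz: "\<forall>j. p $ j \<noteq> 0"
    and y: "y = r_map a (q, p)"
    using assms unfolding L_Ya_def by blast
  obtain t where "q = (\<chi> j. \<Sum>i\<in>UNIV. t $ i * B $ j $ i)" using q unfolding Y_sp_def by blast
  then have q_eq: "q $ j = gfun B j t" for j by (simp add: gfun_def mult.commute)
  have "(\<Sum>j\<in>UNIV. Lam i $ j * (a $ j / p $ j - (q $ j + a $ j / p $ j))) = - t $ i" for i
    using coordinates[of t i] by (simp add: q_eq sum_negf)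
  then have snd_inv: "snd (Psi_inv Lam a y) = - t"
    by (simp add: Psi_inv_def y r_map_def vec_eq_iff)
  have "gfun B j (- t) = - gfun B j t" for j by (simp add: gfun_def sum_negf)
  then have f_inv: "ffun B j (Psi_inv Lam a y) = a $ j / p $ j" for j
    by (simp add: ffun_def snd_inv) (simp add: Psi_inv_def y r_map_def q_eq)
  have "a $ j / ffun B j (Psi_inv Lam a y) = p $ j" for j
    using a_nonzero p_nz by (simp add: f_inv)
  then have "Psi_map B a (Psi_inv Lam a y) = y"
    by (simp add: Psi_map_def y r_map_def vec_eq_iff) (simp add: Psi_inv_def r_map_def)
  moreover have "Psi_inv Lam a y \<in> crit_set B a"
    unfolding crit_set_def U_A_def
    using f_inv a_nonzero p_nz Y_perp_sum_column[OF p] by (simp add: mult.assoc)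
  ultimately show ?thesis by blast
qed

lemma bij_betw_Psi_map_crit_set:
  "bij_betw (Psi_map B a) (crit_set B a) (L_Ya B a)"
proof (rule bij_betw_byWitness[where f'="Psi_inv Lam a"])
  show "\<forall>z\<in>crit_set B a. Psi_inv Lam a (Psi_map B a z) = z"
    using Psi_inv_Psi_map by (simp add: crit_set_def)
  show "\<forall>y\<in>L_Ya B a. Psi_map B a (Psi_inv Lam a y) = y"
    using Psi_map_Psi_inv_and_mem_crit_set by blast
  show "Psi_map B a ` crit_set B a \<subseteq> L_Ya B a"
    using Psi_map_mem_L_Ya a_nonzero by blast
  show "Psi_inv Lam a ` L_Ya B a \<subseteq> crit_set B a"
    using Psi_map_Psi_inv_and_mem_crit_set by blast
qed

lemma inv_into_Psi_map_crit_set: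
  assumes "y \<in> L_Ya B a"
  shows "inv_into (crit_set B a) (Psi_map B a) y = Psi_inv Lam a y"
  using bij_betw_Psi_map_crit_set Psi_map_Psi_inv_and_mem_crit_set[OF assms]
  by (auto simp: bij_betw_def intro: inv_into_f_eq)

end

lemma smooth_on_Psi_map:
  fixes B :: "complex^'k^'n" and a :: "complex^'n"
  shows "smooth_on (U_A B) (Psi_map B a)"
proof (rule smooth_on_inverse_poly_maps[OF bounded_linear_ffun])
  show "bounded_linear (\<lambda>w::complex. ((0::complex^'n), (\<chi> i::'n. if i = j then w else 0)))" for j
    unfolding linear_conv_bounded_linear[symmetric] by (rule linearI) (simp_all add: vec_eq_iff)
  show "Psi_map B a \<in> inverse_poly_maps (ffun B) (\<lambda>j w. (0, \<chi> i. if i = j then w else 0))"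
    unfolding inverse_poly_maps_def
  proof (intro CollectI exI conjI)
    show "bounded_linear (\<lambda>z::(complex^'n) \<times> (complex^'k). (fst z, (0::complex^'n)))"
      unfolding linear_conv_bounded_linear[symmetric] by (rule linearI) (simp_all add: vec_eq_iff)
    show "Psi_map B a = (\<lambda>z. (fst z, 0::complex^'n) + 0 + (\<Sum>j\<in>UNIV. ((0::complex^'n),
        (\<chi> i. if i = j then poly [:0, a $ j:] (inverse (ffun B j z)) else 0))))"
      by (auto simp: fun_eq_iff Psi_map_def vec_eq_iff sum_prod divide_inverse
          if_distrib[of "\<lambda>x. x $ _"] cong: if_cong)
  qed
qed (auto simp: U_A_def)

lemma smooth_on_Psi_inv:
  fixes Lam :: "'k::finite \<Rightarrow> complex^'n::finite" and a :: "complex^'n"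
  shows "smooth_on {y. \<forall>j. snd y $ j \<noteq> 0} (Psi_inv Lam a :: _ \<Rightarrow> (complex^'n) \<times> (complex^'k))"
proof (rule smooth_on_inverse_poly_maps[OF bounded_linear_snd_nth])
  show "bounded_linear (\<lambda>w::complex. ((0::complex^'n), (\<chi> i::'k. Lam i $ j * a $ j * w)))" for j
    unfolding linear_conv_bounded_linear[symmetric]
    by (rule linearI) (simp_all add: vec_eq_iff algebra_simps scaleR_complex scaleR_vec_nth)
  show "Psi_inv Lam a \<in> inverse_poly_maps (\<lambda>j y. snd y $ j)
      (\<lambda>j w. ((0::complex^'n), (\<chi> i::'k. Lam i $ j * a $ j * w)))"
    unfolding inverse_poly_maps_def
  proof (intro CollectI exI conjI)
    show "bounded_linear (\<lambda>y::(complex^'n) \<times> (complex^'n).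
        (fst y, (\<chi> i::'k. - (\<Sum>j\<in>UNIV. Lam i $ j * fst y $ j))))"
      unfolding linear_conv_bounded_linear[symmetric]
      by (rule linearI) (simp_all add: vec_eq_iff algebra_simps scaleR_complex
          scaleR_vec_nth sum.distrib sum_distrib_left)
    show "Psi_inv Lam a = (\<lambda>y. (fst y, (\<chi> i::'k. - (\<Sum>j\<in>UNIV. Lam i $ j * fst y $ j))) + 0 +
        (\<Sum>j\<in>UNIV. ((0::complex^'n), (\<chi> i. Lam i $ j * a $ j * poly [:0, 1:] (inverse (snd y $ j))))))"
      by (auto simp: fun_eq_iff Psi_inv_def vec_eq_iff sum_prod divide_inverse algebra_simps
          sum_subtractf sum_negf)
  qed
qed auto

theorem theorem4p5:
  fixes B :: "complex^'k^'n" and a :: "complex^'n"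
  assumes "0 < CARD('k)" and "CARD('k) < CARD('n)"
    and "\<forall>j. \<exists>i. B $ j $ i \<noteq> 0"
    and span: "g_span_dual B"
    and a_nonzero: "\<forall>j. a $ j \<noteq> 0"
    and "\<forall>j. \<not> (Y_perp B \<subseteq> {p. p $ j = 0})"
    and "crit_set B a \<noteq> {}"
  shows "diffeomorphism_onto (Psi_map B a) (crit_set B a) (L_Ya B a)"
proof -
  obtain Lam where coordinates: "\<And>i t. t $ i = (\<Sum>j\<in>UNIV. Lam i $ j * gfun B j t)"
    using g_span_dual_coordinates[OF span] by blast
  have "smooth_map_on (crit_set B a) (Psi_map B a)"
    by (rule smooth_map_on_if_smooth_on_open[OF open_U_A _ smooth_on_Psi_map])
       (auto simp: crit_set_def)
  moreover have "smooth_map_on (L_Ya B a) (inv_into (crit_set B a) (Psi_map B a))"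
    by (rule smooth_map_on_if_smooth_on_open[OF open_Collect_all_nonzero[OF bounded_linear_snd_nth]
          _ smooth_on_Psi_inv inv_into_Psi_map_crit_set[OF coordinates a_nonzero]])
       (auto simp: L_Ya_def r_map_def)
  ultimately show ?thesis
    using bij_betw_Psi_map_crit_set[OF coordinates a_nonzero] unfolding diffeomorphism_onto_def by blast
qed

end
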